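(* Let $(M,d)$ be a bounded hyperconvex metric space and let $T: M\to M$ be an orbitally wrt nonexpansive mapping. Then $F(T)=\{x\in M: Tx=x\}\neq\emptyset$ and $F(T)$ (with the induced metric) is hyperconvex.
   Context: A metric space $(M,d)$ is hyperconvex if for every family of closed balls $\{B(x_i,r_i)\}_{i\in I}$ in $M$ with $d(x_i,x_j)\le r_i+r_j$ for all $i,j$, one has $\bigcap_{i}B(x_i,r_i)\neq\emptyset$. For $x\in M$, $K\subseteq M$, $r_x(K)=\sup\{d(x,y):y\in K\}$; $O_T(y)=\{y,Ty,T^2y,\dots\}$. $T$ is orbitally wrt nonexpansive if $d(Tx,Ty)\le r_x(O_T(y))$ for all $x,y\in M$. *)

theory Defs
  imports "HOL-Analysis.Analysis"
begin

definition hyperconvex :: "'a::metric_space set \<Rightarrow> bool" where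
  "hyperconvex S \<longleftrightarrow>
     (\<forall>F \<subseteq> S \<times> (UNIV :: real set).
        (\<forall>(x, r) \<in> F. \<forall>(y, s) \<in> F. dist x y \<le> r + s) \<longrightarrow>
        (\<exists>z \<in> S. \<forall>(x, r) \<in> F. dist x z \<le> r))"

definition orbit :: "('a \<Rightarrow> 'a) \<Rightarrow> 'a \<Rightarrow> 'a set" where
  "orbit T y = range (\<lambda>n. (T ^^ n) y)"

definition rad :: "'a::metric_space \<Rightarrow> 'a set \<Rightarrow> real" where
  "rad x K = (SUP y\<in>K. dist x y)"

definition orbitally_wrt_nonexpansive :: "'a::metric_space set \<Rightarrow> ('a \<Rightarrow> 'a) \<Rightarrow> bool" where
  "orbitally_wrt_nonexpansive M T \<longleftrightarrow>
     (\<forall>x\<in>M. \<forall>y\<in>M. dist (T x) (T y) \<le> rad x (orbit T y))"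

end

theory Submission
  imports Defs
begin

(* Call a set admissible if it is the intersection of M with closed balls centred in M.
   Hyperconvexity makes the intersection of a chain of nonempty admissible sets nonempty,
   so by Zorn's lemma there is a minimal nonempty T-invariant admissible set K. Minimality
   forces every ball centred in M that contains T K to contain K. The points of K within
   diam K / 2 of all of K form a nonempty admissible set (K is itself hyperconvex), and the
   orbital condition together with the previous remark makes it invariant; by minimality it
   is K, so diam K = 0 and K consists of a fixed point.
   For the fixed point set: the admissible set cut out by pairwise compatible balls centred at
   fixed points is hyperconvex and invariant, hence contains a fixed point. *)

lemma subset_Zorn_minimal:
  assumes "\<And>C. subset.chain A C \<Longrightarrow> \<exists>L\<in>A. \<forall>X\<in>C. L \<subseteq> X"
  shows "\<exists>M\<in>A. \<forall>X\<in>A. X \<subseteq> M \<longrightarrow> X = M"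
proof -
  have "\<exists>U\<in>uminus ` A. \<forall>X\<in>C. X \<subseteq> U" if "subset.chain (uminus ` A) C" for C
  proof -
    have "subset.chain A (uminus ` C)"
      using that unfolding subset_chain_def by (auto simp: image_iff)
    then obtain L where "L \<in> A" "\<forall>X\<in>uminus ` C. L \<subseteq> X"
      using assms by blast
    then show ?thesis
      by (intro bexI[of _ "- L"]) auto
  qed
  then obtain U where "U \<in> uminus ` A" "\<forall>X\<in>uminus ` A. U \<subseteq> X \<longrightarrow> X = U"
    using subset_Zorn[of "uminus ` A"] by blast
  then show ?thesis
    by (intro bexI[of _ "- U"]) (auto simp: image_iff)
qed

lemma orbit_subset:
  assumes "y \<in> K" "T ` K \<subseteq> K"
  shows "orbit T y \<subseteq> K"
proof -
  have "(T ^^ n) y \<in> K" for n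
    by (induction n) (use assms in auto)
  then show ?thesis
    unfolding orbit_def by blast
qed

lemma orbit_fixed_point:
  assumes "T x = x"
  shows "orbit T x = {x}"
proof -
  have "(T ^^ n) x = x" for n
    by (induction n) (use assms in auto)
  then show ?thesis
    unfolding orbit_def by auto
qed

lemma orbit_nonempty: "orbit T y \<noteq> {}"
  unfolding orbit_def by simp

lemma rad_singleton [simp]: "rad x {y} = dist x y"
  unfolding rad_def by simp

lemma rad_le:
  assumes "K \<noteq> {}" "\<And>y. y \<in> K \<Longrightarrow> dist x y \<le> c"
  shows "rad x K \<le> c"
  unfolding rad_def using assms by (rule cSUP_least)

lemma orbitally_wrt_nonexpansiveD:
  "orbitally_wrt_nonexpansive M T \<Longrightarrow> x \<in> M \<Longrightarrow> y \<in> M \<Longrightarrow>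
    dist (T x) (T y) \<le> rad x (orbit T y)"
  unfolding orbitally_wrt_nonexpansive_def by blast

lemma orbitally_wrt_nonexpansive_subset:
  "orbitally_wrt_nonexpansive M T \<Longrightarrow> S \<subseteq> M \<Longrightarrow> orbitally_wrt_nonexpansive S T"
  unfolding orbitally_wrt_nonexpansive_def by blast

definition admissible :: "'a::metric_space set \<Rightarrow> ('a \<times> real) set \<Rightarrow> 'a set" where
  "admissible M F = {z \<in> M. \<forall>(x, r) \<in> F. dist x z \<le> r}"

lemma admissible_subset: "admissible M F \<subseteq> M"
  unfolding admissible_def by auto

lemma admissible_Un: "admissible M (F \<union> G) = admissible M F \<inter> admissible M G"
  unfolding admissible_def by auto

lemma admissible_UN: "admissible M (\<Union>i\<in>I. F i) = M \<inter> (\<Inter>i\<in>I. admissible M (F i))"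
  unfolding admissible_def by auto

lemma hyperconvexD:
  assumes "hyperconvex M" "F \<subseteq> M \<times> UNIV"
    and "\<And>x r y s. (x, r) \<in> F \<Longrightarrow> (y, s) \<in> F \<Longrightarrow> dist x y \<le> r + s"
  shows "admissible M F \<noteq> {}"
proof -
  have "\<forall>(x, r) \<in> F. \<forall>(y, s) \<in> F. dist x y \<le> r + s"
    using assms(3) by blast
  then have "\<exists>z \<in> M. \<forall>(x, r) \<in> F. dist x z \<le> r"
    using assms(1,2) unfolding hyperconvex_def by simp
  then show ?thesis
    unfolding admissible_def by blast
qed

lemma hyperconvex_admissible:
  assumes "hyperconvex M" "F \<subseteq> M \<times> UNIV" "admissible M F \<noteq> {}"
  shows "hyperconvex (admissible M F)"
  unfolding hyperconvex_def
proof (intro allI impI)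
  fix G
  assume G: "G \<subseteq> admissible M F \<times> (UNIV :: real set)"
    and G_compatible: "\<forall>(x, r)\<in>G. \<forall>(y, s)\<in>G. dist x y \<le> r + s"
  obtain w where w: "w \<in> admissible M F"
    using assms(3) by blast
  have "admissible M (F \<union> G) \<noteq> {}"
  proof (rule hyperconvexD[OF assms(1)])
    show "F \<union> G \<subseteq> M \<times> UNIV"
      using assms(2) G admissible_subset by blast
  next
    have F_G: "dist x y \<le> r + s" if "(x, r) \<in> F" "(y, s) \<in> G" for x r y s
    proof -
      have "dist x y \<le> r"
        using that G unfolding admissible_def by blast
      moreover have "dist y y \<le> s + s"
        using that(2) G_compatible by blast
      ultimately show ?thesis
        by simp
    qed
    fix x r y s
    assume "(x, r) \<in> F \<union> G" "(y, s) \<in> F \<union> G"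
    then consider "(x, r) \<in> F" "(y, s) \<in> F" | "(x, r) \<in> F" "(y, s) \<in> G"
      | "(x, r) \<in> G" "(y, s) \<in> F" | "(x, r) \<in> G" "(y, s) \<in> G"
      by blast
    then show "dist x y \<le> r + s"
    proof cases
      case 1
      then have "dist x w \<le> r" "dist y w \<le> s"
        using w unfolding admissible_def by auto
      then show ?thesis
        using dist_triangle2[of x y w] by linarith
    next
      case 2
      then show ?thesis
        using F_G by blast
    next
      case 3
      then show ?thesis
        using F_G[of y s x r] by (simp add: dist_commute)
    next
      case 4
      then show ?thesis
        using G_compatible by blast
    qed
  qed
  then obtain z where "z \<in> admissible M F" "z \<in> admissible M G"
    unfolding admissible_Un by blast
  then show "\<exists>z\<in>admissible M F. \<forall>(x, r)\<in>G. dist x z \<le> r"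
    unfolding admissible_def by blast
qed

lemma hyperconvex_diameter_centre:
  assumes "hyperconvex K" "bounded K"
  shows "\<exists>z\<in>K. \<forall>y\<in>K. dist y z \<le> diameter K / 2"
proof -
  have "admissible K (K \<times> {diameter K / 2}) \<noteq> {}"
  proof (rule hyperconvexD[OF assms(1)])
    fix x r y s
    assume "(x, r) \<in> K \<times> {diameter K / 2}" "(y, s) \<in> K \<times> {diameter K / 2}"
    then show "dist x y \<le> r + s"
      using diameter_bounded_bound[OF assms(2), of x y] by auto
  qed auto
  then show ?thesis
    unfolding admissible_def by auto
qed

lemma admissible_Inter_chain:
  assumes "hyperconvex M"
    and admissible: "\<And>K. K \<in> \<K> \<Longrightarrow> K \<noteq> {} \<and> (\<exists>F \<subseteq> M \<times> UNIV. K = admissible M F)"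
    and chain: "\<And>K L. K \<in> \<K> \<Longrightarrow> L \<in> \<K> \<Longrightarrow> K \<subseteq> L \<or> L \<subseteq> K"
  shows "M \<inter> \<Inter>\<K> \<noteq> {} \<and> (\<exists>F \<subseteq> M \<times> UNIV. M \<inter> \<Inter>\<K> = admissible M F)"
proof -
  obtain FF where FF: "\<And>K. K \<in> \<K> \<Longrightarrow> FF K \<subseteq> M \<times> UNIV \<and> K = admissible M (FF K)"
    using admissible by metis
  define G where "G = (\<Union>K\<in>\<K>. FF K)"
  have G: "G \<subseteq> M \<times> UNIV"
    using FF unfolding G_def by blast
  have G_Inter: "admissible M G = M \<inter> \<Inter>\<K>"
    unfolding G_def admissible_UN using FF by auto
  have "admissible M G \<noteq> {}"
  proof (rule hyperconvexD[OF assms(1) G])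
    fix x r y s
    assume "(x, r) \<in> G" "(y, s) \<in> G"
    then obtain K L where KL: "K \<in> \<K>" "L \<in> \<K>" "(x, r) \<in> FF K" "(y, s) \<in> FF L"
      unfolding G_def by blast
    obtain z where "z \<in> K" "z \<in> L"
      using chain[OF KL(1,2)] admissible[OF KL(1)] admissible[OF KL(2)] by blast
    then have "z \<in> admissible M (FF K)" "z \<in> admissible M (FF L)"
      using FF[OF KL(1)] FF[OF KL(2)] by auto
    then have "dist x z \<le> r" "dist y z \<le> s"
      using KL(3,4) unfolding admissible_def by auto
    then show "dist x y \<le> r + s"
      using dist_triangle2[of x y z] by linarith
  qed
  then show ?thesis
    unfolding G_Inter [symmetric] using G by blast
qed

definition invariant_admissible :: "'a::metric_space set \<Rightarrow> ('a \<Rightarrow> 'a) \<Rightarrow> 'a set \<Rightarrow> bool" where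
  "invariant_admissible M T K \<longleftrightarrow>
     K \<noteq> {} \<and> T ` K \<subseteq> K \<and> (\<exists>F \<subseteq> M \<times> UNIV. K = admissible M F)"

definition minimal_invariant_admissible ::
    "'a::metric_space set \<Rightarrow> ('a \<Rightarrow> 'a) \<Rightarrow> 'a set \<Rightarrow> bool" where
  "minimal_invariant_admissible M T K \<longleftrightarrow>
     invariant_admissible M T K \<and> (\<forall>L. invariant_admissible M T L \<longrightarrow> L \<subseteq> K \<longrightarrow> L = K)"

lemma minimal_invariant_admissible_exists:
  assumes "hyperconvex M" "T ` M \<subseteq> M"
  shows "\<exists>K. minimal_invariant_admissible M T K"
proof -
  have "\<exists>L\<in>Collect (invariant_admissible M T). \<forall>X\<in>C. L \<subseteq> X"
    if chain: "subset.chain (Collect (invariant_admissible M T)) C" for C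
  proof (intro bexI[of _ "M \<inter> \<Inter>C"])
    have C: "\<And>K. K \<in> C \<Longrightarrow> invariant_admissible M T K"
      using chain unfolding subset_chain_def by blast
    have "M \<inter> \<Inter>C \<noteq> {} \<and> (\<exists>F \<subseteq> M \<times> UNIV. M \<inter> \<Inter>C = admissible M F)"
    proof (rule admissible_Inter_chain[OF assms(1)])
      show "\<And>K. K \<in> C \<Longrightarrow> K \<noteq> {} \<and> (\<exists>F\<subseteq>M \<times> UNIV. K = admissible M F)"
        using C unfolding invariant_admissible_def by blast
      show "\<And>K L. K \<in> C \<Longrightarrow> L \<in> C \<Longrightarrow> K \<subseteq> L \<or> L \<subseteq> K"
        using chain unfolding subset_chain_def by blast
    qed
    moreover have "T ` (M \<inter> \<Inter>C) \<subseteq> M \<inter> \<Inter>C"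
    proof -
      have "T ` K \<subseteq> K" if "K \<in> C" for K
        using C[OF that] unfolding invariant_admissible_def by blast
      then show ?thesis
        using assms(2) by fast
    qed
    ultimately show "M \<inter> \<Inter>C \<in> Collect (invariant_admissible M T)"
      unfolding invariant_admissible_def by blast
  qed blast
  then obtain K where "K \<in> Collect (invariant_admissible M T)"
    "\<forall>L\<in>Collect (invariant_admissible M T). L \<subseteq> K \<longrightarrow> L = K"
    by (rule subset_Zorn_minimal[THEN bexE])
  then show ?thesis
    unfolding minimal_invariant_admissible_def by auto
qed

lemma minimal_invariant_admissible_cover:
  assumes "minimal_invariant_admissible M T K" "x \<in> M" "\<forall>y\<in>K. dist x (T y) \<le> r"
  shows "\<forall>y\<in>K. dist x y \<le> r"
proof -
  obtain F where F: "F \<subseteq> M \<times> UNIV" "K = admissible M F" and K: "K \<noteq> {}" "T ` K \<subseteq> K"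
    using assms(1) unfolding minimal_invariant_admissible_def invariant_admissible_def by blast
  define L where "L = admissible M (F \<union> {(x, r)})"
  have L: "L = {y \<in> K. dist x y \<le> r}"
    unfolding L_def F(2) admissible_def by auto
  have TK: "T ` K \<subseteq> L"
    using K(2) assms(3) unfolding L by auto
  have "L \<noteq> {}"
    using TK K(1) by blast
  moreover have "T ` L \<subseteq> L"
    using TK unfolding L by blast
  moreover have "F \<union> {(x, r)} \<subseteq> M \<times> UNIV"
    using F(1) assms(2) by blast
  ultimately have "invariant_admissible M T L"
    unfolding invariant_admissible_def using L_def by blast
  then have "L = K"
    using assms(1) unfolding minimal_invariant_admissible_def L by blast
  then show ?thesis
    unfolding L by blast
qed

lemma minimal_invariant_admissible_centre_image:
  assumes "orbitally_wrt_nonexpansive M T" "minimal_invariant_admissible M T K"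
    and "z \<in> K" "\<forall>y\<in>K. dist y z \<le> c"
  shows "\<forall>y\<in>K. dist (T z) y \<le> c"
proof -
  obtain F where F: "K = admissible M F" and K: "T ` K \<subseteq> K"
    using assms(2) unfolding minimal_invariant_admissible_def invariant_admissible_def by blast
  have KM: "K \<subseteq> M"
    using F admissible_subset by blast
  have "dist (T z) (T y) \<le> c" if "y \<in> K" for y
  proof -
    have "dist (T z) (T y) \<le> rad z (orbit T y)"
      using orbitally_wrt_nonexpansiveD[OF assms(1)] assms(3) that KM by blast
    also have "\<dots> \<le> c"
      using orbit_nonempty[of T y] orbit_subset[OF that K] assms(4)
      by (intro rad_le) (auto simp: dist_commute)
    finally show ?thesis .
  qed
  then show ?thesis
    using minimal_invariant_admissible_cover[OF assms(2)] assms(3) K KM by blast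
qed

lemma diameter_le_half_imp_singleton:
  assumes "bounded K" "K \<noteq> {}" "\<And>x y. x \<in> K \<Longrightarrow> y \<in> K \<Longrightarrow> dist x y \<le> diameter K / 2"
  shows "\<exists>x. K = {x}"
proof -
  have "diameter K = 0"
  proof (rule ccontr)
    assume "diameter K \<noteq> 0"
    then have "0 < diameter K"
      using diameter_ge_0[OF assms(1)] by linarith
    then obtain x y where "x \<in> K" "y \<in> K" "diameter K / 2 < dist x y"
      using diameter_lower_bounded[OF assms(1), of "diameter K / 2"] by auto
    then show False
      using assms(3) by fastforce
  qed
  obtain x where x: "x \<in> K"
    using assms(2) by blast
  have "y = x" if "y \<in> K" for y
    using assms(3)[OF x that] \<open>diameter K = 0\<close> by simp
  then show ?thesis
    using x by blast
qed

lemma minimal_invariant_admissible_singleton: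
  assumes "bounded M" "hyperconvex M" "orbitally_wrt_nonexpansive M T"
    and minimal: "minimal_invariant_admissible M T K"
  shows "\<exists>x. K = {x}"
proof -
  obtain F where F: "F \<subseteq> M \<times> UNIV" "K = admissible M F" and K: "K \<noteq> {}" "T ` K \<subseteq> K"
    using minimal unfolding minimal_invariant_admissible_def invariant_admissible_def by blast
  have KM: "K \<subseteq> M"
    using F(2) admissible_subset by blast
  have bounded: "bounded K"
    using bounded_subset[OF assms(1) KM] .
  have "hyperconvex K"
    using hyperconvex_admissible[OF assms(2) F(1)] F(2) K(1) by simp
  define \<delta> where "\<delta> = diameter K"
  define L where "L = admissible M (F \<union> K \<times> {\<delta> / 2})"
  have "admissible M (K \<times> {\<delta> / 2}) = {z \<in> M. \<forall>y\<in>K. dist y z \<le> \<delta> / 2}"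
    unfolding admissible_def by auto
  then have L: "L = {z \<in> K. \<forall>y\<in>K. dist y z \<le> \<delta> / 2}"
    unfolding L_def admissible_Un F(2) [symmetric] using KM by auto
  have "L \<noteq> {}"
    using hyperconvex_diameter_centre[OF \<open>hyperconvex K\<close> bounded] unfolding L \<delta>_def by blast
  moreover have "T ` L \<subseteq> L"
  proof
    fix u
    assume "u \<in> T ` L"
    then obtain z where z: "z \<in> K" "\<forall>y\<in>K. dist y z \<le> \<delta> / 2" "u = T z"
      unfolding L by blast
    then show "u \<in> L"
      using minimal_invariant_admissible_centre_image[OF assms(3) minimal z(1,2)] K(2)
      unfolding L by (auto simp: dist_commute)
  qed
  moreover have "F \<union> K \<times> {\<delta> / 2} \<subseteq> M \<times> UNIV"
    using F(1) KM by blast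
  ultimately have "invariant_admissible M T L"
    unfolding invariant_admissible_def using L_def by blast
  then have "L = K"
    using minimal unfolding minimal_invariant_admissible_def L by blast
  then show ?thesis
    using diameter_le_half_imp_singleton[OF bounded K(1)] unfolding L \<delta>_def by blast
qed

theorem orbitally_wrt_nonexpansive_fixed_point:
  assumes "bounded M" "hyperconvex M" "T ` M \<subseteq> M" "orbitally_wrt_nonexpansive M T"
  shows "\<exists>x\<in>M. T x = x"
proof -
  obtain K where K: "minimal_invariant_admissible M T K"
    using minimal_invariant_admissible_exists[OF assms(2,3)] by blast
  then obtain x where "K = {x}"
    using minimal_invariant_admissible_singleton[OF assms(1,2,4)] by blast
  moreover obtain F where "T ` K \<subseteq> K" "K = admissible M F"
    using K unfolding minimal_invariant_admissible_def invariant_admissible_def by blast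
  ultimately have "T x = x" "x \<in> M"
    using admissible_subset by auto
  then show ?thesis
    by blast
qed

lemma admissible_fixed_centres_invariant:
  assumes "T ` M \<subseteq> M" "orbitally_wrt_nonexpansive M T" "F \<subseteq> {x \<in> M. T x = x} \<times> UNIV"
  shows "T ` admissible M F \<subseteq> admissible M F"
proof
  fix u
  assume "u \<in> T ` admissible M F"
  then obtain z where z: "z \<in> admissible M F" "u = T z"
    by blast
  have "dist x (T z) \<le> r" if "(x, r) \<in> F" for x r
  proof -
    have x: "x \<in> M" "T x = x"
      using that assms(3) by auto
    have "dist x (T z) = dist (T z) (T x)"
      using x(2) by (simp add: dist_commute)
    also have "\<dots> \<le> rad z (orbit T x)"
      using orbitally_wrt_nonexpansiveD[OF assms(2)] z(1) admissible_subset x(1) by blast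
    also have "\<dots> = dist z x"
      using orbit_fixed_point[of T x, OF x(2)] by simp
    also have "\<dots> \<le> r"
      using z(1) that unfolding admissible_def by (auto simp: dist_commute)
    finally show ?thesis .
  qed
  moreover have "T z \<in> M"
    using z(1) admissible_subset assms(1) by blast
  ultimately show "u \<in> admissible M F"
    unfolding z(2) admissible_def by auto
qed

theorem corollary2p2:
  fixes M :: "'a::metric_space set" and T :: "'a \<Rightarrow> 'a"
  assumes "bounded M"
    and "hyperconvex M"
    and "T ` M \<subseteq> M"
    and "orbitally_wrt_nonexpansive M T"
  shows "{x \<in> M. T x = x} \<noteq> {} \<and> hyperconvex {x \<in> M. T x = x}"
proof -
  have fixed_point: "\<exists>x\<in>S. T x = x" if "S \<subseteq> M" "hyperconvex S" "T ` S \<subseteq> S" for S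
    using orbitally_wrt_nonexpansive_fixed_point[OF bounded_subset[OF assms(1) that(1)] that(2,3)
        orbitally_wrt_nonexpansive_subset[OF assms(4) that(1)]] .
  have "hyperconvex {x \<in> M. T x = x}"
    unfolding hyperconvex_def
  proof (intro allI impI)
    fix F
    assume F: "F \<subseteq> {x \<in> M. T x = x} \<times> (UNIV :: real set)"
      and compatible: "\<forall>(x, r)\<in>F. \<forall>(y, s)\<in>F. dist x y \<le> r + s"
    have FM: "F \<subseteq> M \<times> UNIV"
      using F by blast
    have "admissible M F \<noteq> {}"
      using hyperconvexD[OF assms(2) FM] compatible by fast
    then obtain z where "z \<in> admissible M F" "T z = z"
      using fixed_point[OF admissible_subset hyperconvex_admissible[OF assms(2) FM]
          admissible_fixed_centres_invariant[OF assms(3,4) F]] by blast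
    then show "\<exists>z\<in>{x \<in> M. T x = x}. \<forall>(x, r)\<in>F. dist x z \<le> r"
      unfolding admissible_def by auto
  qed
  moreover have "{x \<in> M. T x = x} \<noteq> {}"
    using fixed_point[of M] assms(2,3) by blast
  ultimately show ?thesis
    by blast
qed

end
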